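(* Let $P_s(u)=u^3/3+u^2+s$, $\mathbb{H}=\{z:\mathrm{Im}\, z>0\}$, and for $\rho>0$ let $\mathbb{D}^+_\rho=\{s\in\mathbb{H}:|s|<\rho\}$. Write $s^-=s+\tfrac43$. For $s\in\mathbb{H}$ the roots of $P_s$ are distinct, analytic in $s$, and can be labeled $r_1(s),r_2(s),r_3(s)$ so that: (0) For $s\in\mathbb{H}$: $r_1\in-\mathbb{H}$ and $\mathrm{Re}\, r_1<-2$; $r_2\in\mathbb{H}$, $\arg r_2>\arctan(3/2)$ and $\arg(r_2+2)<\pi-\arctan(3/2)$; $r_3\in-\mathbb{H}$ and $\mathrm{Re}\, r_3>0$. (i) For $s\in\mathbb{D}^+_{\sqrt{2/3}}$, with the branch of $\sqrt{s}$ that is positive for $s>0$, $$|r_1+3+s/3|<|s|^2,\qquad |r_2-i\sqrt{s}|<|s|,\qquad |r_3+i\sqrt{s}|<|s|.$$ (ii) For $s^-\in\mathbb{D}^+_{\sqrt{2/3}}$, $$|2+r_1+\sqrt{s^-}|<|s^-|,\qquad |2+r_2-\sqrt{s^-}|<|s^-|,\qquad |r_3-1+s^-/3|<|s^-|^2.$$ (iii) Let $r_j(s;t)$ be the roots of $tu^3/3+u^2+s$, labeled so that $r_j(s;1)=r_j(s)$. If $s\in\mathbb{D}^+_{1/10}$ then $r_2(s;t),r_3(s;t)$ are real analytic in $t\in(0,1)$. If $s^-\in\mathbb{D}^+_{1/10}$ then $r_1(s;t),r_2(s;t)$ are real analytic in $t\in(0,1)$. (iv) If $s\in\mathbb{D}^+_{21/4}$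 then $|r_j(s)|<399/100$ for $j=1,2,3$.
   Context: $\arg$ denotes the principal argument. $-\mathbb{H}$ denotes the open lower half plane. *)

theory Defs
  imports "HOL-Analysis.Analysis"
begin

definition P :: "complex \<Rightarrow> complex \<Rightarrow> complex" where
  "P s u = u ^ 3 / 3 + u ^ 2 + s"

definition Pt :: "real \<Rightarrow> complex \<Rightarrow> complex \<Rightarrow> complex" where
  "Pt t s u = of_real t * u ^ 3 / 3 + u ^ 2 + s"

definition UHP :: "complex set" where
  "UHP = {z. Im z > 0}"

definition Dplus :: "real \<Rightarrow> complex set" where
  "Dplus \<rho> = {s. Im s > 0 \<and> cmod s < \<rho>}"

definition real_analytic_on :: "real set \<Rightarrow> (real \<Rightarrow> complex) \<Rightarrow> bool" where
  "real_analytic_on A f \<longleftrightarrow>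
     (\<forall>t0\<in>A. \<exists>\<delta>>0. \<exists>c::nat \<Rightarrow> complex.
        \<forall>t\<in>A. \<bar>t - t0\<bar> < \<delta> \<longrightarrow> (\<lambda>n. c n * of_real ((t - t0) ^ n)) sums f t)"

definition root_labeling ::
  "complex \<Rightarrow> (real \<Rightarrow> complex) \<Rightarrow> (real \<Rightarrow> complex) \<Rightarrow> (real \<Rightarrow> complex)
    \<Rightarrow> complex \<Rightarrow> complex \<Rightarrow> complex \<Rightarrow> bool" where
  "root_labeling s R1 R2 R3 a1 a2 a3 \<longleftrightarrow>
     (\<forall>t\<in>{0<..1}. Pt t s (R1 t) = 0 \<and> Pt t s (R2 t) = 0 \<and> Pt t s (R3 t) = 0 \<and>
        R1 t \<noteq> R2 t \<and> R1 t \<noteq> R3 t \<and> R2 t \<noteq> R3 t) \<and>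
     continuous_on {0<..1} R1 \<and> continuous_on {0<..1} R2 \<and> continuous_on {0<..1} R3 \<and>
     R1 1 = a1 \<and> R2 1 = a2 \<and> R3 1 = a3"

end

theory Submission
  imports Defs "HOL-Complex_Analysis.Conformal_Mappings"
begin

text \<open>With \<open>z = u + 1\<close> and \<open>c = s + 2/3\<close> the equation \<open>P s u = 0\<close> becomes the depressed cubic
  \<open>z\<^sup>3 - 3z + 3c = 0\<close>. For \<open>Im c > 0\<close> its roots avoid the curves on which \<open>Im (z\<^sup>3 - 3z)\<close>
  vanishes, namely the real axis and the hyperbola \<open>3x\<^sup>2 - y\<^sup>2 = 3\<close>, so they lie in the three
  regions \<open>Z1\<close>, \<open>Z2\<close>, \<open>Z3\<close>; Vieta's relations force exactly one root into each.
  Hence \<open>u \<mapsto> -(u\<^sup>3/3 + u\<^sup>2)\<close> maps each (shifted) region bijectively onto the upper half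
  plane, and its holomorphic inverses are the branches \<open>r\<^sub>j\<close>.
  The estimates (i) follow from \<open>|3 P s a| = \<Prod>\<^sub>j |a - r\<^sub>j s|\<close> at the approximate roots \<open>a\<close>;
  (ii) is (i) transported by the symmetry \<open>(s, u) \<mapsto> (-cnj s - 4/3, -2 - cnj u)\<close>;
  (iii) follows from \<open>t r\<^sub>j(s;t) = r\<^sub>j(s t\<^sup>2)\<close>, where connectedness of \<open>(0,1]\<close> fixes the labels.\<close>

section \<open>Roots of the depressed cubic\<close>

definition depressed_cubic :: "complex \<Rightarrow> complex \<Rightarrow> complex" where
  "depressed_cubic c z = z ^ 3 - 3 * z + 3 * c"

definition Z1 :: "complex set" where
  "Z1 = {z. Im z < 0 \<and> Re z < 0 \<and> (Re z)\<^sup>2 - (Im z)\<^sup>2 / 3 > 1}"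

definition Z2 :: "complex set" where
  "Z2 = {z. Im z > 0 \<and> (Re z)\<^sup>2 - (Im z)\<^sup>2 / 3 < 1}"

definition Z3 :: "complex set" where
  "Z3 = {z. Im z < 0 \<and> Re z > 0 \<and> (Re z)\<^sup>2 - (Im z)\<^sup>2 / 3 > 1}"

lemma Z_disjoint: "z \<in> Z1 \<Longrightarrow> z \<notin> Z2" "z \<in> Z1 \<Longrightarrow> z \<notin> Z3" "z \<in> Z2 \<Longrightarrow> z \<notin> Z3"
  by (auto simp: Z1_def Z2_def Z3_def)

lemma open_Z: "open Z1" "open Z2" "open Z3"
  unfolding Z1_def Z2_def Z3_def
  by (auto intro!: open_Collect_conj open_Collect_less continuous_intros)

lemma Z_separation:
  assumes "Q \<in> {Z1, Z2, Z3}"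
  obtains Q' where "open Q'" "Q \<inter> Q' = {}" "Z1 \<union> Z2 \<union> Z3 \<subseteq> Q \<union> Q'"
proof -
  from assms consider "Q = Z1" | "Q = Z2" | "Q = Z3" by blast
  then show thesis
  proof cases
    case 1
    then show thesis using that[of "Z2 \<union> Z3"] open_Z Z_disjoint by auto
  next
    case 2
    then show thesis using that[of "Z1 \<union> Z3"] open_Z Z_disjoint by auto
  next
    case 3
    then show thesis using that[of "Z1 \<union> Z2"] open_Z Z_disjoint by auto
  qed
qed

lemma Im_depressed_cubic:
  "Im (depressed_cubic c z) = Im z * (3 * (Re z)\<^sup>2 - (Im z)\<^sup>2 - 3) + 3 * Im c"
  by (simp add: depressed_cubic_def power3_eq_cube power2_eq_square algebra_simps)

lemma depressed_cubic_root_in_Z: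
  assumes "Im c > 0" "depressed_cubic c z = 0"
  shows "z \<in> Z1 \<union> Z2 \<union> Z3"
proof -
  have neg: "Im z * (3 * (Re z)\<^sup>2 - (Im z)\<^sup>2 - 3) < 0"
    using assms Im_depressed_cubic[of c z] by simp
  show ?thesis
  proof (cases "Im z > 0")
    case True
    with neg show ?thesis by (auto simp: Z2_def mult_less_0_iff)
  next
    case False
    with neg have "Im z < 0" and pos: "3 * (Re z)\<^sup>2 - (Im z)\<^sup>2 - 3 > 0"
      by (auto simp: mult_less_0_iff)
    moreover have "Re z \<noteq> 0"
    proof
      assume "Re z = 0"
      with pos show False using zero_le_power2[of "Im z"] by simp
    qed
    ultimately show ?thesis by (auto simp: Z1_def Z3_def)
  qed
qed

lemma vieta_Re_Im:
  assumes "z1 + z2 + z3 = 0" "z1 * z2 + z1 * z3 + z2 * z3 = -3"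
  shows "Re z1 + Re z2 + Re z3 = 0" "Im z1 + Im z2 + Im z3 = 0"
    "(Re z1)\<^sup>2 - (Im z1)\<^sup>2 + ((Re z2)\<^sup>2 - (Im z2)\<^sup>2) + ((Re z3)\<^sup>2 - (Im z3)\<^sup>2) = 6"
    "Re z1 * Im z1 + Re z2 * Im z2 + Re z3 * Im z3 = 0"
proof -
  have "z1\<^sup>2 + z2\<^sup>2 + z3\<^sup>2 = (z1 + z2 + z3)\<^sup>2 - 2 * (z1 * z2 + z1 * z3 + z2 * z3)"
    by algebra
  with assms have sq: "z1\<^sup>2 + z2\<^sup>2 + z3\<^sup>2 = 6" by simp
  show "Re z1 + Re z2 + Re z3 = 0" "Im z1 + Im z2 + Im z3 = 0"
    using arg_cong[OF assms(1), of Re] arg_cong[OF assms(1), of Im] by simp_all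
  show "(Re z1)\<^sup>2 - (Im z1)\<^sup>2 + ((Re z2)\<^sup>2 - (Im z2)\<^sup>2) + ((Re z3)\<^sup>2 - (Im z3)\<^sup>2) = 6"
    using arg_cong[OF sq, of Re] by (simp add: power2_eq_square)
  show "Re z1 * Im z1 + Re z2 * Im z2 + Re z3 * Im z3 = 0"
    using arg_cong[OF sq, of Im] by (simp add: power2_eq_square algebra_simps)
qed

text \<open>No two roots of a Vieta triple share a region; in real coordinates:\<close>

lemma not_two_in_Z2_real:
  fixes x1 x2 x3 y1 y2 y3 :: real
  assumes "x1 + x2 + x3 = 0" "y1 + y2 + y3 = 0"
    "x1\<^sup>2 - y1\<^sup>2 + (x2\<^sup>2 - y2\<^sup>2) + (x3\<^sup>2 - y3\<^sup>2) = 6"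
    "y1 > 0" "y2 > 0" "x1\<^sup>2 - y1\<^sup>2 / 3 < 1" "x2\<^sup>2 - y2\<^sup>2 / 3 < 1"
  shows False
proof -
  have x3: "x3 = -(x1 + x2)" and y3: "y3 = -(y1 + y2)" using assms by linarith+
  have "(x1 + x2)\<^sup>2 \<le> 2 * x1\<^sup>2 + 2 * x2\<^sup>2"
    using zero_le_power2[of "x1 - x2"] by (simp add: power2_eq_square algebra_simps)
  moreover have "(y1 + y2)\<^sup>2 > 0" using assms by simp
  ultimately show False
    using assms(3,6,7) unfolding x3 y3 by (simp add: power2_eq_square algebra_simps)
qed

lemma not_two_below_same_side_real:
  fixes x1 x2 x3 y1 y2 y3 :: real
  assumes "x1 + x2 + x3 = 0" "x1 * y1 + x2 * y2 + x3 * y3 = 0" "y1 > 0" "y2 < 0" "y3 < 0"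
    "x2 > 0 \<and> x3 > 0 \<or> x2 < 0 \<and> x3 < 0"
  shows False
  using assms by (smt (verit) mult_neg_pos mult_pos_neg mult_pos_pos mult_neg_neg)

lemma vieta_meets_each_Z:
  assumes v: "z1 + z2 + z3 = 0" "z1 * z2 + z1 * z3 + z2 * z3 = -3"
    and m: "z1 \<in> Z1 \<union> Z2 \<union> Z3" "z2 \<in> Z1 \<union> Z2 \<union> Z3" "z3 \<in> Z1 \<union> Z2 \<union> Z3"
    and Q: "Q \<in> {Z1, Z2, Z3}"
  shows "z1 \<in> Q \<or> z2 \<in> Q \<or> z3 \<in> Q"
proof -
  note R = vieta_Re_Im[OF v]
  have some_Z2: "z1 \<in> Z2 \<or> z2 \<in> Z2 \<or> z3 \<in> Z2"
  proof (rule ccontr)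
    assume "\<not> ?thesis"
    hence "Im z1 < 0" "Im z2 < 0" "Im z3 < 0" using m by (auto simp: Z1_def Z3_def)
    thus False using R(2) by linarith
  qed
  have no_two_Z2: "\<not> (z1 \<in> Z2 \<and> z2 \<in> Z2)" "\<not> (z1 \<in> Z2 \<and> z3 \<in> Z2)" "\<not> (z2 \<in> Z2 \<and> z3 \<in> Z2)"
    using not_two_in_Z2_real[of "Re z1" "Re z2" "Re z3" "Im z1" "Im z2" "Im z3"]
      not_two_in_Z2_real[of "Re z1" "Re z3" "Re z2" "Im z1" "Im z3" "Im z2"]
      not_two_in_Z2_real[of "Re z2" "Re z3" "Re z1" "Im z2" "Im z3" "Im z1"] R
    by (auto simp: Z2_def algebra_simps)
  have no_two_Z1: "\<not> (z1 \<in> Z2 \<and> z2 \<in> Z1 \<and> z3 \<in> Z1)" "\<not> (z2 \<in> Z2 \<and> z1 \<in> Z1 \<and> z3 \<in> Z1)"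
    "\<not> (z3 \<in> Z2 \<and> z1 \<in> Z1 \<and> z2 \<in> Z1)"
    using not_two_below_same_side_real[of "Re z1" "Re z2" "Re z3" "Im z1" "Im z2" "Im z3"]
      not_two_below_same_side_real[of "Re z2" "Re z1" "Re z3" "Im z2" "Im z1" "Im z3"]
      not_two_below_same_side_real[of "Re z3" "Re z1" "Re z2" "Im z3" "Im z1" "Im z2"] R
    by (auto simp: Z1_def Z2_def algebra_simps)
  have no_two_Z3: "\<not> (z1 \<in> Z2 \<and> z2 \<in> Z3 \<and> z3 \<in> Z3)" "\<not> (z2 \<in> Z2 \<and> z1 \<in> Z3 \<and> z3 \<in> Z3)"
    "\<not> (z3 \<in> Z2 \<and> z1 \<in> Z3 \<and> z2 \<in> Z3)"
    using not_two_below_same_side_real[of "Re z1" "Re z2" "Re z3" "Im z1" "Im z2" "Im z3"]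
      not_two_below_same_side_real[of "Re z2" "Re z1" "Re z3" "Im z2" "Im z1" "Im z3"]
      not_two_below_same_side_real[of "Re z3" "Re z1" "Re z2" "Im z3" "Im z1" "Im z2"] R
    by (auto simp: Z3_def Z2_def algebra_simps)
  from Q show ?thesis
    using some_Z2 no_two_Z2 no_two_Z1 no_two_Z3 m Z_disjoint by fastforce
qed

lemma depressed_cubic_vieta_root:
  assumes "z1 + z2 + z3 = 0" "z1 * z2 + z1 * z3 + z2 * z3 = -3" "depressed_cubic c z1 = 0"
  shows "depressed_cubic c z2 = 0"
proof -
  have z3: "z3 = - z1 - z2" using assms(1) by (simp add: eq_neg_iff_add_eq_0 algebra_simps)
  have e: "z1\<^sup>2 + z1 * z2 + z2\<^sup>2 = 3"
    using assms(2) unfolding z3 by (simp add: algebra_simps power2_eq_square)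
  have "depressed_cubic c z2 = depressed_cubic c z2 - depressed_cubic c z1"
    using assms(3) by simp
  also have "\<dots> = (z2 - z1) * (z1\<^sup>2 + z1 * z2 + z2\<^sup>2 - 3)"
    by (simp add: depressed_cubic_def algebra_simps power2_eq_square power3_eq_cube)
  finally show ?thesis using e by simp
qed

lemma depressed_cubic_vieta_triple:
  obtains z1 z2 z3 where "z1 + z2 + z3 = 0" "z1 * z2 + z1 * z3 + z2 * z3 = -3"
    "depressed_cubic c z1 = 0"
proof -
  define a :: "nat \<Rightarrow> complex"
    where "a i = (if i = 0 then 3 * c else if i = 1 then -3 else if i = 3 then 1 else 0)" for i
  obtain z where z: "(\<Sum>i\<le>3. a i * z ^ i) = 0"
    by (rule fundamental_theorem_of_algebra[of a 3]) (auto simp: a_def)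
  have "(\<Sum>i\<le>3. a i * z ^ i) = depressed_cubic c z"
    by (simp add: a_def depressed_cubic_def numeral_3_eq_3 algebra_simps)
  with z have root: "depressed_cubic c z = 0" by simp
  define w where "w = csqrt (12 - 3 * z\<^sup>2)"
  have w2: "w\<^sup>2 = 12 - 3 * z\<^sup>2" unfolding w_def by simp
  show ?thesis
  proof (rule that[of z "(- z + w) / 2" "(- z - w) / 2"])
    show "z + (- z + w) / 2 + (- z - w) / 2 = 0" by (simp add: field_simps)
    have "z * ((- z + w) / 2) + z * ((- z - w) / 2) + (- z + w) / 2 * ((- z - w) / 2)
        = (- 3 * z\<^sup>2 - w\<^sup>2) / 4" by (simp add: field_simps power2_eq_square)
    then show "z * ((- z + w) / 2) + z * ((- z - w) / 2) + (- z + w) / 2 * ((- z - w) / 2) = -3"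
      using w2 by simp
  qed (rule root)
qed

lemma depressed_cubic_root_in_each_Z:
  assumes "Im c > 0" "Q \<in> {Z1, Z2, Z3}"
  shows "\<exists>z\<in>Q. depressed_cubic c z = 0"
proof -
  obtain z1 z2 z3 where v: "z1 + z2 + z3 = 0" "z1 * z2 + z1 * z3 + z2 * z3 = -3"
    and r1: "depressed_cubic c z1 = 0"
    by (rule depressed_cubic_vieta_triple)
  have r2: "depressed_cubic c z2 = 0" by (rule depressed_cubic_vieta_root[OF v r1])
  have r3: "depressed_cubic c z3 = 0"
    by (rule depressed_cubic_vieta_root[of z1 z3 z2]) (use v r1 in \<open>simp_all add: algebra_simps\<close>)
  have "z1 \<in> Q \<or> z2 \<in> Q \<or> z3 \<in> Q"
    using vieta_meets_each_Z[OF v _ _ _ assms(2)] depressed_cubic_root_in_Z[OF assms(1)] r1 r2 r3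
    by blast
  with r1 r2 r3 show ?thesis by blast
qed

text \<open>Two distinct roots \<open>z, w\<close> complete to a Vieta triple with \<open>-(z + w)\<close>, which must then
  meet all three regions.\<close>

lemma depressed_cubic_root_unique_in_Z:
  assumes "Im c > 0" "depressed_cubic c z = 0" "depressed_cubic c w = 0"
    and Q: "Q \<in> {Z1, Z2, Z3}" and "z \<in> Q" "w \<in> Q"
  shows "z = w"
proof (rule ccontr)
  assume ne: "z \<noteq> w"
  have "(z - w) * (z\<^sup>2 + z * w + w\<^sup>2 - 3) = depressed_cubic c z - depressed_cubic c w"
    by (simp add: depressed_cubic_def algebra_simps power2_eq_square power3_eq_cube)
  with assms(2,3) ne have e: "z\<^sup>2 + z * w + w\<^sup>2 = 3" by simp
  define v where "v = - (z + w)"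
  have v1: "z + v + w = 0" unfolding v_def by simp
  have v2: "z * v + z * w + v * w = -3"
    using e unfolding v_def by (simp add: algebra_simps power2_eq_square)
  have "depressed_cubic c v = 0" by (rule depressed_cubic_vieta_root[OF v1 v2 assms(2)])
  hence m: "z \<in> Z1 \<union> Z2 \<union> Z3" "v \<in> Z1 \<union> Z2 \<union> Z3" "w \<in> Z1 \<union> Z2 \<union> Z3"
    using depressed_cubic_root_in_Z[OF assms(1)] assms(2,3) by blast+
  have meets: "z \<in> Q' \<or> v \<in> Q' \<or> w \<in> Q'" if "Q' \<in> {Z1, Z2, Z3}" for Q'
    by (rule vieta_meets_each_Z[OF v1 v2 m that])
  from Q show False
    using meets[of Z1] meets[of Z2] meets[of Z3] Z_disjoint \<open>z \<in> Q\<close> \<open>w \<in> Q\<close> by fastforce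
qed

lemma depressed_cubic_P: "depressed_cubic (s + 2/3) (u + 1) = 3 * P s u"
  by (simp add: depressed_cubic_def P_def algebra_simps power3_eq_cube power2_eq_square)

lemma P_root_in_Z:
  assumes "s \<in> UHP" "P s u = 0"
  shows "u + 1 \<in> Z1 \<union> Z2 \<union> Z3"
  using depressed_cubic_root_in_Z[of "s + 2/3" "u + 1"] assms
  by (simp add: UHP_def depressed_cubic_P)

lemma P_root_unique_in_Z:
  assumes "s \<in> UHP" "P s u = 0" "P s v = 0" "Q \<in> {Z1, Z2, Z3}" "u + 1 \<in> Q" "v + 1 \<in> Q"
  shows "u = v"
  using depressed_cubic_root_unique_in_Z[of "s + 2/3" "u + 1" "v + 1" Q] assms
  by (simp add: UHP_def depressed_cubic_P)

section \<open>Holomorphic root branches\<close>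

definition root_param :: "complex \<Rightarrow> complex" where
  "root_param u = - (u ^ 3 / 3 + u ^ 2)"

lemma P_eq_0_iff_root_param: "P s u = 0 \<longleftrightarrow> root_param u = s"
  unfolding P_def root_param_def add_eq_0_iff by auto

lemma Im_root_param_pos:
  assumes "u + 1 \<in> Z1 \<union> Z2 \<union> Z3"
  shows "Im (root_param u) > 0"
proof -
  have "Im (root_param u) = - Im (u + 1) * ((Re (u + 1))\<^sup>2 - (Im (u + 1))\<^sup>2 / 3 - 1)"
    by (simp add: root_param_def power3_eq_cube power2_eq_square field_simps)
  with assms show ?thesis
    by (auto simp: Z1_def Z2_def Z3_def mult_less_0_iff zero_less_mult_iff)
qed

definition root_branch :: "complex set \<Rightarrow> (complex \<Rightarrow> complex) \<Rightarrow> bool" where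
  "root_branch Q r \<longleftrightarrow> (\<forall>s\<in>UHP. r s + 1 \<in> Q \<and> P s (r s) = 0)"

lemma root_branch_exists:
  assumes Q: "Q \<in> {Z1, Z2, Z3}"
  obtains r where "r holomorphic_on UHP" "root_branch Q r"
proof -
  define S where "S = (\<lambda>u. u + 1) -` Q"
  have "open Q" using Q open_Z by blast
  hence "open S" unfolding S_def by (rule continuous_open_vimage) (intro continuous_intros)
  have "root_param holomorphic_on S"
    unfolding root_param_def by (intro holomorphic_intros) simp
  moreover have "inj_on root_param S"
  proof (rule inj_onI)
    fix u v assume uv: "u \<in> S" "v \<in> S" "root_param u = root_param v"
    have "root_param u \<in> UHP"
      using Im_root_param_pos Q uv(1) by (auto simp: S_def UHP_def)
    with uv Q show "u = v"
      by (auto simp: S_def P_eq_0_iff_root_param intro: P_root_unique_in_Z[of "root_param u" _ _ Q])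
  qed
  ultimately obtain g where g: "g holomorphic_on root_param ` S"
    "\<And>u. u \<in> S \<Longrightarrow> g (root_param u) = u"
    using holomorphic_has_inverse \<open>open S\<close> by metis
  have img: "root_param ` S = UHP"
  proof
    show "root_param ` S \<subseteq> UHP"
      using Im_root_param_pos Q by (auto simp: S_def UHP_def)
    show "UHP \<subseteq> root_param ` S"
    proof
      fix s assume s: "s \<in> UHP"
      then obtain z where z: "z \<in> Q" "depressed_cubic (s + 2/3) z = 0"
        using depressed_cubic_root_in_each_Z[OF _ Q, of "s + 2/3"] by (auto simp: UHP_def)
      hence "root_param (z - 1) = s"
        using depressed_cubic_P[of s "z - 1"] by (simp add: P_eq_0_iff_root_param[symmetric])
      moreover have "z - 1 \<in> S" using z(1) by (simp add: S_def)
      ultimately show "s \<in> root_param ` S" by blast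
    qed
  qed
  show ?thesis
  proof (rule that[of g])
    show "g holomorphic_on UHP" using g(1) img by simp
    show "root_branch Q g"
      unfolding root_branch_def
    proof
      fix s assume "s \<in> UHP"
      then obtain u where "u \<in> S" "s = root_param u" using img by blast
      with g(2) show "g s + 1 \<in> Q \<and> P s (g s) = 0"
        by (simp add: S_def P_eq_0_iff_root_param)
    qed
  qed
qed

definition root_branches :: "(complex \<Rightarrow> complex) \<Rightarrow> (complex \<Rightarrow> complex) \<Rightarrow> (complex \<Rightarrow> complex) \<Rightarrow> bool" where
  "root_branches r1 r2 r3 \<longleftrightarrow> root_branch Z1 r1 \<and> root_branch Z2 r2 \<and> root_branch Z3 r3"

lemma root_branchesD:
  assumes "root_branches r1 r2 r3" "s \<in> UHP"
  shows "r1 s + 1 \<in> Z1" "r2 s + 1 \<in> Z2" "r3 s + 1 \<in> Z3"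
    "P s (r1 s) = 0" "P s (r2 s) = 0" "P s (r3 s) = 0"
  using assms by (auto simp: root_branches_def root_branch_def)

lemma root_branches_distinct:
  assumes "root_branches r1 r2 r3" "s \<in> UHP"
  shows "r1 s \<noteq> r2 s" "r1 s \<noteq> r3 s" "r2 s \<noteq> r3 s"
  using root_branchesD[OF assms] Z_disjoint by auto

section \<open>Location of the roots\<close>

lemma Z1_Z3_abs_Re_gt_1: "z \<in> Z1 \<union> Z3 \<Longrightarrow> \<bar>Re z\<bar> > 1"
proof -
  assume "z \<in> Z1 \<union> Z3"
  hence "1 < (Re z)\<^sup>2 - (Im z)\<^sup>2 / 3" by (auto simp: Z1_def Z3_def)
  hence "1 < (Re z)\<^sup>2" using zero_le_power2[of "Im z"] by linarith
  thus ?thesis using abs_square_le_1[of "Re z"] by linarith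
qed

lemma Arg_upper_half:
  assumes "0 < Im z"
  shows "Arg z = pi / 2 - arctan (Re z / Im z)"
proof (rule Arg_unique [of "norm z"])
  show "(cmod z) * exp (\<i> * (pi / 2 - arctan (Re z / Im z))) = z"
    apply (rule complex_eqI)
    using assms norm_complex_def [of z, symmetric]
    unfolding exp_Euler cos_diff sin_diff sin_of_real cos_of_real
    by (simp_all add: field_simps real_sqrt_divide sin_arctan cos_arctan)
  show "0 < cmod z" using assms by auto
qed (use arctan [of "Re z / Im z"] in auto)

text \<open>The line through the vertex \<open>(1, 0)\<close> of the hyperbola \<open>3x\<^sup>2 - y\<^sup>2 = 3\<close> with
  slope \<open>3/2\<close> meets it again only at \<open>(-7, -12)\<close>, hence bounds \<open>Z2\<close>.\<close>

lemma Z2_Re_bound: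
  assumes "z \<in> Z2"
  shows "\<bar>Re z\<bar> - 1 < 2 * Im z / 3"
proof (rule ccontr)
  define x y where "x = \<bar>Re z\<bar>" and "y = Im z"
  have xy: "y > 0" "x\<^sup>2 - y\<^sup>2 / 3 < 1" using assms by (auto simp: Z2_def x_def y_def)
  assume "\<not> ?thesis"
  hence h: "2 * y / 3 \<le> x - 1" by (simp add: x_def y_def)
  hence x1: "x > 1" using xy(1) by simp
  have "(2 * y / 3)\<^sup>2 \<le> (x - 1)\<^sup>2" using h xy(1) by (intro power_mono) auto
  moreover have "(x + 7) * (x - 1) > 0" using x1 by simp
  ultimately show False using xy(2) by (simp add: power2_eq_square algebra_simps)
qed

lemma Z2_Arg_bounds:
  assumes "z \<in> Z2"
  shows "Arg (z - 1) > arctan (3/2)" "Arg (z + 1) < pi - arctan (3/2)"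
proof -
  have y: "Im z > 0" using assms by (simp add: Z2_def)
  have b: "Re z - 1 < 2 * Im z / 3" "- (Re z + 1) < 2 * Im z / 3"
    using Z2_Re_bound[OF assms] by linarith+
  have arctan_23: "arctan (2/3) = pi / 2 - arctan (3/2)"
    using arctan_inverse[of "3/2"] by simp
  have "(Re z - 1) / Im z < 2/3" using b(1) y by (simp add: pos_divide_less_eq)
  hence "arctan ((Re z - 1) / Im z) < arctan (2/3)" by (simp add: arctan_less_iff)
  thus "Arg (z - 1) > arctan (3/2)" using Arg_upper_half[of "z - 1"] y arctan_23 by simp
  have "- (2/3) < (Re z + 1) / Im z" using b(2) y by (simp add: pos_less_divide_eq)
  hence "arctan (- (2/3)) < arctan ((Re z + 1) / Im z)" by (simp only: arctan_less_iff)
  hence "- arctan (2/3) < arctan ((Re z + 1) / Im z)" by (simp only: arctan_minus)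
  thus "Arg (z + 1) < pi - arctan (3/2)" using Arg_upper_half[of "z + 1"] y arctan_23 by simp
qed

lemma root_branches_location:
  assumes "root_branches r1 r2 r3" "s \<in> UHP"
  shows "Im (r1 s) < 0 \<and> Re (r1 s) < -2 \<and>
    Im (r2 s) > 0 \<and> Arg (r2 s) > arctan (3/2) \<and> Arg (r2 s + 2) < pi - arctan (3/2) \<and>
    Im (r3 s) < 0 \<and> Re (r3 s) > 0"
proof -
  note m = root_branchesD(1-3)[OF assms]
  have "Im (r1 s) < 0" "Re (r1 s) + 1 < 0" "\<bar>Re (r1 s) + 1\<bar> > 1"
    using m(1) Z1_Z3_abs_Re_gt_1[of "r1 s + 1"] by (simp_all add: Z1_def)
  moreover have "Im (r3 s) < 0" "Re (r3 s) + 1 > 0" "\<bar>Re (r3 s) + 1\<bar> > 1"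
    using m(3) Z1_Z3_abs_Re_gt_1[of "r3 s + 1"] by (simp_all add: Z3_def)
  moreover have "Im (r2 s) > 0" using m(2) by (simp add: Z2_def)
  moreover have "Arg (r2 s) > arctan (3/2)" "Arg (r2 s + 2) < pi - arctan (3/2)"
    using Z2_Arg_bounds[OF m(2)] by (simp_all add: add.assoc)
  ultimately show ?thesis by linarith
qed

lemma P_factor:
  assumes "P s a = 0" "P s b = 0" "P s c = 0" "a \<noteq> b" "a \<noteq> c" "b \<noteq> c"
  shows "3 * P s u = (u - a) * (u - b) * (u - c)"
proof -
  have cubic: "x ^ 3 + 3 * x\<^sup>2 + 3 * s = 3 * P s x" for x
    unfolding P_def by (simp add: field_simps)
  have "(a - b) * (a\<^sup>2 + a * b + b\<^sup>2 + 3 * a + 3 * b) = 3 * P s a - 3 * P s b"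
    unfolding cubic[symmetric] by (simp add: algebra_simps power2_eq_square power3_eq_cube)
  hence eab: "a\<^sup>2 + a * b + b\<^sup>2 + 3 * a + 3 * b = 0" using assms(1,2,4) by simp
  have "(a - c) * (a\<^sup>2 + a * c + c\<^sup>2 + 3 * a + 3 * c) = 3 * P s a - 3 * P s c"
    unfolding cubic[symmetric] by (simp add: algebra_simps power2_eq_square power3_eq_cube)
  hence eac: "a\<^sup>2 + a * c + c\<^sup>2 + 3 * a + 3 * c = 0" using assms(1,3,5) by simp
  have "(b - c) * (a + b + c + 3) = (a\<^sup>2 + a * b + b\<^sup>2 + 3 * a + 3 * b) - (a\<^sup>2 + a * c + c\<^sup>2 + 3 * a + 3 * c)"
    by (simp add: algebra_simps power2_eq_square)
  hence e1: "a + b + c = -3" using eab eac assms(6) by (simp add: add_eq_0_iff2)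
  have "a * b + a * c + b * c = - (a\<^sup>2 + a * b + b\<^sup>2 + 3 * a + 3 * b) + (a + b) * (a + b + c + 3)"
    by (simp add: algebra_simps power2_eq_square)
  hence e2: "a * b + a * c + b * c = 0" using eab e1 by simp
  have "a ^ 3 + 3 * a\<^sup>2 - a * b * c = a ^ 3 - (a + b + c) * a\<^sup>2 + (a * b + a * c + b * c) * a - a * b * c"
    using e1 e2 by simp
  also have "\<dots> = 0" by (simp add: algebra_simps power2_eq_square power3_eq_cube)
  finally have "a * b * c = (a ^ 3 + 3 * a\<^sup>2 + 3 * s) - 3 * s" by simp
  hence e3: "a * b * c = -3 * s" using assms(1) cubic[of a] by simp
  have "(u - a) * (u - b) * (u - c) = u ^ 3 - (a + b + c) * u\<^sup>2 + (a * b + a * c + b * c) * u - a * b * c"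
    by (simp add: algebra_simps power2_eq_square power3_eq_cube)
  also have "\<dots> = 3 * P s u" unfolding e1 e2 e3 cubic[symmetric] by simp
  finally show ?thesis by simp
qed

lemma root_branches_norm_P:
  assumes "root_branches r1 r2 r3" "s \<in> UHP"
  shows "cmod (3 * P s u) = cmod (u - r1 s) * cmod (u - r2 s) * cmod (u - r3 s)"
  using P_factor[OF root_branchesD(4-6)[OF assms] root_branches_distinct[OF assms], of u]
  by (simp add: norm_mult)

section \<open>The roots near \<open>s = 0\<close>\<close>

lemma csqrt_upper_half:
  assumes "Im s > 0"
  shows "Re (csqrt s) > 0" "Im (csqrt s) > 0"
proof -
  have "Im s = Im ((csqrt s)\<^sup>2)" by simp
  also have "\<dots> = 2 * Re (csqrt s) * Im (csqrt s)" by (simp add: power2_eq_square)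
  finally have "2 * Re (csqrt s) * Im (csqrt s) > 0" using assms by simp
  with Re_csqrt[of s] show "Re (csqrt s) > 0" "Im (csqrt s) > 0"
    by (auto simp: zero_less_mult_iff)
qed

text \<open>In each estimate below, \<open>|3 P s a| = \<Prod>\<^sub>j |a - r\<^sub>j s|\<close> is small at the approximate root
  \<open>a\<close> while the two factors of the other roots are bounded below.\<close>

lemma root2_near_0:
  assumes rb: "root_branches r1 r2 r3" and s: "s \<in> UHP" and small: "cmod s < 1"
  shows "cmod (r2 s - \<i> * csqrt s) < cmod s"
proof -
  define q where "q = csqrt s"
  define t where "t = cmod q"
  define a where "a = \<i> * q"
  have q: "Re q > 0" "Im q > 0" using csqrt_upper_half s unfolding q_def UHP_def by auto
  have t2: "t\<^sup>2 = cmod s" unfolding t_def q_def by simp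
  have t: "0 < t" "t < 1" using s small by (auto simp: t_def q_def UHP_def)
  have qt: "Im q \<le> t" using abs_Im_le_cmod[of q] unfolding t_def by auto
  have reg: "Re (r1 s) < -2" "Im (r3 s) < 0" "Re (r3 s) > 0"
    using root_branches_location[OF rb s] by auto
  have "a\<^sup>2 = - s" unfolding a_def q_def by (simp add: power_mult_distrib)
  hence "3 * P s a = a ^ 3"
    unfolding P_def by (simp add: field_simps power3_eq_cube power2_eq_square)
  hence prod: "cmod (a - r2 s) * (cmod (a - r1 s) * cmod (a - r3 s)) = t ^ 3"
    using root_branches_norm_P[OF rb s, of a] by (simp add: a_def t_def norm_mult norm_power)
  have "cmod (a - r1 s) > 1"
    using complex_Re_le_cmod[of "a - r1 s"] reg qt t by (simp add: a_def)
  moreover have "cmod (a - r3 s) > t"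
  proof -
    have "(Im q)\<^sup>2 < (Im q + Re (r3 s))\<^sup>2" using q reg by (intro power_strict_mono) auto
    moreover have "(Re q)\<^sup>2 < (Re q - Im (r3 s))\<^sup>2" using q reg by (intro power_strict_mono) auto
    moreover have "Re (a - r3 s) = - (Im q + Re (r3 s))" "Im (a - r3 s) = Re q - Im (r3 s)"
      by (simp_all add: a_def)
    ultimately have "t\<^sup>2 < (cmod (a - r3 s))\<^sup>2"
      unfolding t_def cmod_power2 by (simp only: power2_minus)
    thus ?thesis by (rule power_less_imp_less_base) simp
  qed
  ultimately have XY: "1 * t < cmod (a - r1 s) * cmod (a - r3 s)"
    using t by (intro mult_strict_mono) auto
  hence "cmod (a - r2 s) * (cmod (a - r1 s) * cmod (a - r3 s)) < t\<^sup>2 * (cmod (a - r1 s) * cmod (a - r3 s))"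
    using prod t by (simp add: power3_eq_cube power2_eq_square mult.assoc)
  hence "cmod (a - r2 s) < t\<^sup>2"
    using t XY by (subst (asm) mult_less_cancel_right_pos) auto
  thus ?thesis using t2 by (simp add: a_def q_def norm_minus_commute)
qed

lemma root3_near_0:
  assumes rb: "root_branches r1 r2 r3" and s: "s \<in> UHP" and small: "cmod s < 1"
  shows "cmod (r3 s + \<i> * csqrt s) < cmod s"
proof -
  define q where "q = csqrt s"
  define t where "t = cmod q"
  define b where "b = - \<i> * q"
  have q: "Re q > 0" "Im q > 0" using csqrt_upper_half s unfolding q_def UHP_def by auto
  have t2: "t\<^sup>2 = cmod s" unfolding t_def q_def by simp
  have t: "0 < t" "t < 1" using s small by (auto simp: t_def q_def UHP_def)
  have reg: "Re (r1 s) < -2" using root_branches_location[OF rb s] by auto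
  have "b\<^sup>2 = - s" unfolding b_def q_def by (simp add: power_mult_distrib)
  hence "3 * P s b = b ^ 3"
    unfolding P_def by (simp add: field_simps power3_eq_cube power2_eq_square)
  hence prod: "cmod (b - r3 s) * (cmod (b - r1 s) * cmod (b - r2 s)) = t ^ 3"
    using root_branches_norm_P[OF rb s, of b] by (simp add: b_def t_def norm_mult norm_power)
  have "cmod (b - r1 s) > 2"
    using complex_Re_le_cmod[of "b - r1 s"] reg q by (simp add: b_def)
  moreover have "cmod (b - r2 s) > t"
  proof -
    have "cmod (r2 s - \<i> * q) < t\<^sup>2" using root2_near_0[OF rb s small] t2 by (simp add: q_def)
    moreover have "b - r2 s = - (2 * \<i> * q) + - (r2 s - \<i> * q)" by (simp add: b_def)
    hence "cmod (b - r2 s) \<ge> cmod (2 * \<i> * q) - cmod (r2 s - \<i> * q)"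
      using norm_diff_ineq[of "- (2 * \<i> * q)" "- (r2 s - \<i> * q)"] by (simp only: norm_minus_cancel)
    moreover have "t\<^sup>2 < t" using t by (simp add: power2_eq_square)
    ultimately show ?thesis by (simp add: norm_mult t_def)
  qed
  ultimately have XY: "1 * t < cmod (b - r1 s) * cmod (b - r2 s)"
    using t by (intro mult_strict_mono) auto
  hence "cmod (b - r3 s) * (cmod (b - r1 s) * cmod (b - r2 s)) < t\<^sup>2 * (cmod (b - r1 s) * cmod (b - r2 s))"
    using prod t by (simp add: power3_eq_cube power2_eq_square mult.assoc)
  hence "cmod (b - r3 s) < t\<^sup>2"
    using t XY by (subst (asm) mult_less_cancel_right_pos) auto
  thus ?thesis using t2 by (simp add: b_def q_def norm_minus_commute)
qed

lemma root1_near_0: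
  assumes rb: "root_branches r1 r2 r3" and s: "s \<in> UHP" and small: "cmod s < 1"
  shows "cmod (r1 s + 3 + s / 3) < (cmod s)\<^sup>2"
proof -
  define c where "c = -3 - s / 3"
  have Pc: "3 * P s c = - (s\<^sup>2 * (2/3 + s / 27))"
    unfolding P_def c_def by (simp add: field_simps power3_eq_cube power2_eq_square)
  have "cmod (2/3 + s / 27) \<le> 2/3 + cmod s / 27"
    using norm_triangle_ineq[of "2/3" "s / 27"] by (simp add: norm_divide)
  also have "\<dots> < 1" using small by simp
  moreover have "0 < cmod s" using s by (auto simp: UHP_def)
  ultimately have W: "cmod (3 * P s c) < (cmod s)\<^sup>2"
    unfolding Pc by (simp add: norm_mult norm_power mult_less_cancel_left1)
  have Re_s: "Re s \<ge> -1" using abs_Re_le_cmod[of s] small by simp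
  have "cmod (r2 s) < 2"
  proof -
    have "cmod (r2 s) \<le> cmod (r2 s - \<i> * csqrt s) + sqrt (cmod s)"
      using norm_triangle_ineq[of "r2 s - \<i> * csqrt s" "\<i> * csqrt s"] by (simp add: norm_mult)
    moreover have "cmod (r2 s - \<i> * csqrt s) < 1" using root2_near_0[OF rb s small] small by simp
    moreover have "sqrt (cmod s) < 1" using small by simp
    ultimately show ?thesis by linarith
  qed
  hence "Re (r2 s - c) \<ge> 2/3" using abs_Re_le_cmod[of "r2 s"] Re_s by (simp add: c_def)
  hence B: "cmod (c - r2 s) \<ge> 2/3"
    using complex_Re_le_cmod[of "r2 s - c"] by (simp add: norm_minus_commute)
  have "Re (r3 s - c) \<ge> 8/3" using root_branches_location[OF rb s] Re_s by (simp add: c_def)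
  hence C: "cmod (c - r3 s) \<ge> 8/3"
    using complex_Re_le_cmod[of "r3 s - c"] by (simp add: norm_minus_commute)
  have "1 \<le> cmod (c - r2 s) * cmod (c - r3 s)"
    using mult_mono[OF B C] by simp
  hence "cmod (c - r1 s) \<le> cmod (c - r1 s) * (cmod (c - r2 s) * cmod (c - r3 s))"
    using mult_left_mono[of 1 _ "cmod (c - r1 s)"] by simp
  also have "\<dots> < (cmod s)\<^sup>2"
    using W root_branches_norm_P[OF rb s, of c] by (simp add: mult.assoc)
  finally have "cmod (r1 s - c) < (cmod s)\<^sup>2" by (simp add: norm_minus_commute)
  moreover have "r1 s - c = r1 s + 3 + s / 3" by (simp add: c_def)
  ultimately show ?thesis by simp
qed

section \<open>The roots near \<open>s = -4/3\<close>\<close>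

lemma P_reflect: "P (- cnj s - 4/3) (-2 - cnj u) = - cnj (P s u)"
  unfolding P_def by (simp add: field_simps power2_eq_square power3_eq_cube)

lemma Z_reflect:
  "u + 1 \<in> Z3 \<Longrightarrow> (-2 - cnj u) + 1 \<in> Z1"
  "u + 1 \<in> Z2 \<Longrightarrow> (-2 - cnj u) + 1 \<in> Z2"
  "u + 1 \<in> Z1 \<Longrightarrow> (-2 - cnj u) + 1 \<in> Z3"
  by (auto simp: Z1_def Z2_def Z3_def power2_eq_square algebra_simps)

lemma root_branches_reflect:
  assumes rb: "root_branches r1 r2 r3" and s: "s \<in> UHP"
  shows "r1 (- cnj s - 4/3) = -2 - cnj (r3 s)" "r2 (- cnj s - 4/3) = -2 - cnj (r2 s)"
    "r3 (- cnj s - 4/3) = -2 - cnj (r1 s)"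
proof -
  define s' where "s' = - cnj s - 4/3"
  have s': "s' \<in> UHP" using s unfolding s'_def UHP_def by simp
  note m = root_branchesD[OF rb s] and m' = root_branchesD[OF rb s']
  have root: "P s' (-2 - cnj u) = 0" if "P s u = 0" for u
    unfolding s'_def P_reflect using that by simp
  show "r1 s' = -2 - cnj (r3 s)"
    by (rule P_root_unique_in_Z[OF s' m'(4) root[OF m(6)] _ m'(1) Z_reflect(1)[OF m(3)]]) simp
  show "r2 s' = -2 - cnj (r2 s)"
    by (rule P_root_unique_in_Z[OF s' m'(5) root[OF m(5)] _ m'(2) Z_reflect(2)[OF m(2)]]) simp
  show "r3 s' = -2 - cnj (r1 s)"
    by (rule P_root_unique_in_Z[OF s' m'(6) root[OF m(4)] _ m'(3) Z_reflect(3)[OF m(1)]]) simp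
qed

lemma csqrt_minus_cnj:
  assumes "Im z > 0"
  shows "csqrt (- cnj z) = \<i> * cnj (csqrt z)"
proof -
  have "(\<i> * cnj (csqrt z))\<^sup>2 = - cnj z"
    by (simp add: power_mult_distrib flip: complex_cnj_power)
  moreover have "Re (\<i> * cnj (csqrt z)) > 0" using csqrt_upper_half[OF assms] by simp
  ultimately show ?thesis using csqrt_square[of "\<i> * cnj (csqrt z)"] by simp
qed

lemma roots_near_minus_4_3:
  assumes rb: "root_branches r1 r2 r3" and s: "s + 4/3 \<in> UHP" and small: "cmod (s + 4/3) < 1"
  shows "cmod (2 + r1 s + csqrt (s + 4/3)) < cmod (s + 4/3)"
    "cmod (2 + r2 s - csqrt (s + 4/3)) < cmod (s + 4/3)"
    "cmod (r3 s - 1 + (s + 4/3) / 3) < (cmod (s + 4/3))\<^sup>2"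
proof -
  define \<sigma> where "\<sigma> = s + 4/3"
  define s' where "s' = - cnj \<sigma>"
  have norm_s': "cmod s' = cmod \<sigma>" by (simp add: s'_def)
  have s': "s' \<in> UHP" "cmod s' < 1"
    using s small unfolding norm_s' unfolding s'_def \<sigma>_def UHP_def by auto
  have "- cnj s' - 4/3 = s" unfolding s'_def \<sigma>_def by simp
  note reflected = root_branches_reflect[OF rb s'(1), unfolded this]
  have "csqrt \<sigma> = \<i> * cnj (csqrt s')"
    using csqrt_minus_cnj[of \<sigma>] s unfolding s'_def \<sigma>_def UHP_def by simp
  hence "2 + r1 s + csqrt \<sigma> = - cnj (r3 s' + \<i> * csqrt s')"
    "2 + r2 s - csqrt \<sigma> = - cnj (r2 s' - \<i> * csqrt s')"
    "r3 s - 1 + \<sigma> / 3 = - cnj (r1 s' + 3 + s' / 3)"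
    unfolding reflected by (simp_all add: s'_def)
  then show "cmod (2 + r1 s + csqrt (s + 4/3)) < cmod (s + 4/3)"
    "cmod (2 + r2 s - csqrt (s + 4/3)) < cmod (s + 4/3)"
    "cmod (r3 s - 1 + (s + 4/3) / 3) < (cmod (s + 4/3))\<^sup>2"
    using root1_near_0[OF rb s'] root2_near_0[OF rb s'] root3_near_0[OF rb s'] norm_s'
    unfolding \<sigma>_def by (simp_all only: norm_minus_cancel complex_mod_cnj)
qed

lemma P_root_norm_bound:
  assumes "P s u = 0" "cmod s < 21/4"
  shows "cmod u < 399/100"
proof (rule ccontr)
  assume "\<not> ?thesis"
  hence big: "cmod u \<ge> 399/100" by simp
  have "u\<^sup>2 * (u / 3 + 1) + s = P s u"
    unfolding P_def by (simp add: field_simps power3_eq_cube power2_eq_square)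
  hence "u\<^sup>2 * (u / 3 + 1) = - s" using assms(1) by (simp add: add_eq_0_iff2)
  hence eq: "(cmod u)\<^sup>2 * cmod (u / 3 + 1) = cmod s"
    by (metis norm_minus_cancel norm_mult norm_power)
  have "cmod (u / 3 + 1) \<ge> cmod u / 3 - 1"
    using norm_triangle_ineq2[of "u / 3" "-1"] by (simp add: norm_divide)
  hence "cmod (u / 3 + 1) \<ge> 33/100" using big by simp
  moreover have "(cmod u)\<^sup>2 \<ge> (399/100)\<^sup>2" using big by (intro power_mono) auto
  ultimately have "(399/100)\<^sup>2 * (33/100) \<le> (cmod u)\<^sup>2 * cmod (u / 3 + 1)"
    by (intro mult_mono) auto
  thus False using eq assms(2) by (simp add: power2_eq_square)
qed

section \<open>The deformed cubic\<close>

lemma P_scale: "P (s * (of_real t)\<^sup>2) (of_real t * u) = (of_real t)\<^sup>2 * Pt t s u"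
  unfolding P_def Pt_def by (simp add: field_simps power2_eq_square power3_eq_cube)

lemma continuous_root_eq_branch:
  assumes Q: "Q \<in> {Z1, Z2, Z3}" and r: "root_branch Q r" and s: "s \<in> UHP"
    and R: "continuous_on {0<..1} R" "\<forall>t\<in>{0<..1}. Pt t s (R t) = 0" "R 1 = r s"
    and t: "t \<in> {0<..1}"
  shows "of_real t * R t = r (s * (of_real t)\<^sup>2)"
proof -
  define g where "g x = of_real x * R x + 1" for x :: real
  have st: "s * (of_real x)\<^sup>2 \<in> UHP" if "x \<in> {0<..1}" for x
    using s that by (simp add: UHP_def)
  have root: "P (s * (of_real x)\<^sup>2) (of_real x * R x) = 0" if "x \<in> {0<..1}" for x
    using P_scale[of s x "R x"] R(2) that by simp
  have conn: "connected (g ` {0<..1})"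
    using R(1) unfolding g_def by (intro connected_continuous_image continuous_intros) auto
  obtain Q' where Q': "open Q'" "Q \<inter> Q' = {}" "Z1 \<union> Z2 \<union> Z3 \<subseteq> Q \<union> Q'"
    using Z_separation[OF Q] .
  have "g ` {0<..1} \<subseteq> Q \<union> Q'"
  proof
    fix y assume "y \<in> g ` {0<..1}"
    then obtain x where x: "x \<in> {0<..1}" "y = g x" by blast
    show "y \<in> Q \<union> Q'" using P_root_in_Z[OF st[OF x(1)] root[OF x(1)]] Q'(3) x(2)
      unfolding g_def by blast
  qed
  moreover have "g 1 \<in> Q" using r s R(3) by (simp add: g_def root_branch_def)
  hence "Q \<inter> g ` {0<..1} \<noteq> {}" by force
  moreover have "open Q" using Q open_Z by blast
  ultimately have "Q' \<inter> g ` {0<..1} = {}"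
    using connectedD[OF conn \<open>open Q\<close> Q'(1)] Q'(2) by blast
  hence in_Q: "of_real t * R t + 1 \<in> Q"
    using \<open>g ` {0<..1} \<subseteq> Q \<union> Q'\<close> t unfolding g_def by blast
  have "P (s * (of_real t)\<^sup>2) (r (s * (of_real t)\<^sup>2)) = 0"
    and branch_in_Q: "r (s * (of_real t)\<^sup>2) + 1 \<in> Q"
    using r st[OF t] by (simp_all add: root_branch_def)
  from P_root_unique_in_Z[OF st[OF t] root[OF t] this(1) Q in_Q branch_in_Q] show ?thesis .
qed

lemma real_analytic_on_holomorphic_restriction:
  assumes hol: "f holomorphic_on W" and W: "open W"
    and A: "\<forall>t\<in>A. complex_of_real t \<in> W \<and> R t = f (complex_of_real t)"
  shows "real_analytic_on A R"
  unfolding real_analytic_on_def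
proof
  fix t0 assume "t0 \<in> A"
  with A W obtain \<delta> where \<delta>: "\<delta> > 0" "ball (complex_of_real t0) \<delta> \<subseteq> W"
    by (meson openE)
  with hol have holB: "f holomorphic_on ball (complex_of_real t0) \<delta>"
    by (blast intro: holomorphic_on_subset)
  show "\<exists>\<delta>>0. \<exists>c. \<forall>t\<in>A. \<bar>t - t0\<bar> < \<delta> \<longrightarrow> (\<lambda>n. c n * of_real ((t - t0) ^ n)) sums R t"
  proof (intro exI conjI ballI impI)
    fix t assume t: "t \<in> A" "\<bar>t - t0\<bar> < \<delta>"
    have "complex_of_real t \<in> ball (complex_of_real t0) \<delta>"
      using t(2) by (simp add: dist_norm abs_minus_commute flip: of_real_diff)
    from holomorphic_power_series[OF holB this]
    show "(\<lambda>n. (deriv ^^ n) f t0 / fact n * of_real ((t - t0) ^ n)) sums R t"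
      using A t(1) by simp
  qed (rule \<delta>(1))
qed

lemma real_analytic_on_scaled_branch:
  assumes hol: "r holomorphic_on UHP" and s: "s \<in> UHP"
    and eq: "\<forall>t\<in>{0<..<1}. of_real t * R t = r (s * (of_real t)\<^sup>2)"
  shows "real_analytic_on {0<..<1} R"
proof (rule real_analytic_on_holomorphic_restriction)
  define W where "W = {w. 0 < Im (s * w\<^sup>2)}"
  show "open W" unfolding W_def by (intro open_Collect_less continuous_intros)
  have "(r \<circ> (\<lambda>w. s * w\<^sup>2)) holomorphic_on W"
    by (rule holomorphic_on_compose_gen[OF _ hol]) (auto intro!: holomorphic_intros simp: W_def UHP_def)
  moreover have "w \<noteq> 0" if "w \<in> W" for w using that unfolding W_def by auto
  ultimately show "(\<lambda>w. r (s * w\<^sup>2) / w) holomorphic_on W"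
    unfolding o_def by (intro holomorphic_intros) auto
  show "\<forall>t\<in>{0<..<1}. complex_of_real t \<in> W \<and> R t = r (s * (of_real t)\<^sup>2) / of_real t"
  proof (intro ballI conjI)
    fix t :: real assume t: "t \<in> {0<..<1}"
    then show "complex_of_real t \<in> W" using s by (simp add: W_def UHP_def)
    have "R t = of_real t * R t / of_real t" using t by simp
    also have "\<dots> = r (s * (of_real t)\<^sup>2) / of_real t" using eq t by simp
    finally show "R t = r (s * (of_real t)\<^sup>2) / of_real t" .
  qed
qed

lemma root_labeling_real_analytic:
  assumes rb: "root_branches r1 r2 r3"
    and hol: "r1 holomorphic_on UHP" "r2 holomorphic_on UHP" "r3 holomorphic_on UHP"
    and s: "s \<in> UHP" and L: "root_labeling s R1 R2 R3 (r1 s) (r2 s) (r3 s)"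
  shows "real_analytic_on {0<..<1} R1 \<and> real_analytic_on {0<..<1} R2 \<and> real_analytic_on {0<..<1} R3"
proof -
  have branch: "root_branch Z1 r1" "root_branch Z2 r2" "root_branch Z3 r3"
    using rb by (simp_all add: root_branches_def)
  from L have roots: "\<forall>t\<in>{0<..1}. Pt t s (R1 t) = 0" "\<forall>t\<in>{0<..1}. Pt t s (R2 t) = 0"
      "\<forall>t\<in>{0<..1}. Pt t s (R3 t) = 0"
    and cont: "continuous_on {0<..1} R1" "continuous_on {0<..1} R2" "continuous_on {0<..1} R3"
    and ends: "R1 1 = r1 s" "R2 1 = r2 s" "R3 1 = r3 s"
    unfolding root_labeling_def by blast+
  have "real_analytic_on {0<..<1} R1"
    by (rule real_analytic_on_scaled_branch[OF hol(1) s])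
      (use continuous_root_eq_branch[OF _ branch(1) s cont(1) roots(1) ends(1)] in auto)
  moreover have "real_analytic_on {0<..<1} R2"
    by (rule real_analytic_on_scaled_branch[OF hol(2) s])
      (use continuous_root_eq_branch[OF _ branch(2) s cont(2) roots(2) ends(2)] in auto)
  moreover have "real_analytic_on {0<..<1} R3"
    by (rule real_analytic_on_scaled_branch[OF hol(3) s])
      (use continuous_root_eq_branch[OF _ branch(3) s cont(3) roots(3) ends(3)] in auto)
  ultimately show ?thesis by blast
qed

theorem lemma1:
  shows "\<exists>r1 r2 r3 :: complex \<Rightarrow> complex.
    r1 holomorphic_on UHP \<and> r2 holomorphic_on UHP \<and> r3 holomorphic_on UHP \<and>
    (\<forall>s\<in>UHP. P s (r1 s) = 0 \<and> P s (r2 s) = 0 \<and> P s (r3 s) = 0 \<and>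
       r1 s \<noteq> r2 s \<and> r1 s \<noteq> r3 s \<and> r2 s \<noteq> r3 s) \<and>
    (\<forall>s\<in>UHP.
       Im (r1 s) < 0 \<and> Re (r1 s) < -2 \<and>
       Im (r2 s) > 0 \<and> Arg (r2 s) > arctan (3/2) \<and> Arg (r2 s + 2) < pi - arctan (3/2) \<and>
       Im (r3 s) < 0 \<and> Re (r3 s) > 0) \<and>
    (\<forall>s\<in>Dplus (sqrt (2/3)).
       cmod (r1 s + 3 + s / 3) < (cmod s) ^ 2 \<and>
       cmod (r2 s - \<i> * csqrt s) < cmod s \<and>
       cmod (r3 s + \<i> * csqrt s) < cmod s) \<and>
    (\<forall>s. s + 4/3 \<in> Dplus (sqrt (2/3)) \<longrightarrow>
       cmod (2 + r1 s + csqrt (s + 4/3)) < cmod (s + 4/3) \<and>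
       cmod (2 + r2 s - csqrt (s + 4/3)) < cmod (s + 4/3) \<and>
       cmod (r3 s - 1 + (s + 4/3) / 3) < (cmod (s + 4/3)) ^ 2) \<and>
    (\<forall>s\<in>Dplus (1/10). \<forall>R1 R2 R3.
       root_labeling s R1 R2 R3 (r1 s) (r2 s) (r3 s) \<longrightarrow>
       real_analytic_on {0<..<1} R2 \<and> real_analytic_on {0<..<1} R3) \<and>
    (\<forall>s. s + 4/3 \<in> Dplus (1/10) \<longrightarrow> (\<forall>R1 R2 R3.
       root_labeling s R1 R2 R3 (r1 s) (r2 s) (r3 s) \<longrightarrow>
       real_analytic_on {0<..<1} R1 \<and> real_analytic_on {0<..<1} R2)) \<and>
    (\<forall>s\<in>Dplus (21/4). cmod (r1 s) < 399/100 \<and> cmod (r2 s) < 399/100 \<and> cmod (r3 s) < 399/100)"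
proof -
  obtain r1 r2 r3 where hol1: "r1 holomorphic_on UHP" and br1: "root_branch Z1 r1"
    and hol2: "r2 holomorphic_on UHP" and br2: "root_branch Z2 r2"
    and hol3: "r3 holomorphic_on UHP" and br3: "root_branch Z3 r3"
    by (metis insertI1 insertI2 root_branch_exists)
  note hol = hol1 hol2 hol3
  have rb: "root_branches r1 r2 r3" using br1 br2 br3 by (simp add: root_branches_def)
  have Dplus: "s \<in> UHP" "cmod s < \<rho>" if "s \<in> Dplus \<rho>" for s \<rho>
    using that by (simp_all add: Dplus_def UHP_def)
  have shift: "s \<in> UHP" if "s + 4/3 \<in> UHP" for s
    using that by (simp add: UHP_def)
  have small: "cmod s < 1" if "s \<in> Dplus (sqrt (2/3))" for s
    using Dplus(2)[OF that] real_sqrt_lt_1_iff[of "2/3"] by linarith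
  show ?thesis
    apply (rule exI[of _ r1], rule exI[of _ r2], rule exI[of _ r3], intro conjI hol)
    subgoal using root_branchesD(4-6)[OF rb] root_branches_distinct[OF rb] by blast
    subgoal using root_branches_location[OF rb] by blast
    subgoal using root1_near_0[OF rb] root2_near_0[OF rb] root3_near_0[OF rb] Dplus small by blast
    subgoal using roots_near_minus_4_3[OF rb] Dplus small by blast
    subgoal using root_labeling_real_analytic[OF rb hol] Dplus by blast
    subgoal using root_labeling_real_analytic[OF rb hol] Dplus shift by blast
    subgoal using P_root_norm_bound root_branchesD(4-6)[OF rb] Dplus by blast
    done
qed

end
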